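(* Let $H$ be a finite simple graph with $n=|V(H)|\ge 1$ vertices, chromatic number $\chi=\chi(H)$, and let $m'=m'(H)$ denote the number of non-edges of $H$. Then $$\left\lceil \frac{n}{\chi} \right\rceil \left( n - \frac{\chi}{2}\left\lceil\frac{n}{\chi}-1\right\rceil\right) \leq \rho(H) \leq n+m'.$$
   Context: All graphs are finite and simple. A coloring of a graph means a proper vertex coloring. An induced subgraph is rainbow if all its vertices receive pairwise different colors. For a graph $H$, $\rho(H)$ is the least number $m$ such that there exists a graph $G$ on $m$ vertices with the property that every proper vertex coloring of $G$ contains a rainbow induced subgraph isomorphic to $H$. A non-edge of $H$ is an unordered pair of distinct non-adjacent vertices of $H$. *)

theory Defs
  imports Complex_Main
begin

definition simple_graph :: "'a set \<Rightarrow> ('a \<Rightarrow> 'a \<Rightarrow> bool) \<Rightarrow> bool" where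
  "simple_graph V E \<longleftrightarrow> finite V \<and> (\<forall>x y. E x y \<longrightarrow> x \<in> V \<and> y \<in> V)
     \<and> (\<forall>x y. E x y \<longrightarrow> E y x) \<and> (\<forall>x. \<not> E x x)"

definition proper_coloring :: "'a set \<Rightarrow> ('a \<Rightarrow> 'a \<Rightarrow> bool) \<Rightarrow> ('a \<Rightarrow> nat) \<Rightarrow> bool" where
  "proper_coloring V E c \<longleftrightarrow> (\<forall>x\<in>V. \<forall>y\<in>V. E x y \<longrightarrow> c x \<noteq> c y)"

definition chromatic_number :: "'a set \<Rightarrow> ('a \<Rightarrow> 'a \<Rightarrow> bool) \<Rightarrow> nat" where
  "chromatic_number V E = (LEAST k. \<exists>c. proper_coloring V E c \<and> c ` V \<subseteq> {..<k})"

definition induced_embedding ::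
  "'a set \<Rightarrow> ('a \<Rightarrow> 'a \<Rightarrow> bool) \<Rightarrow> 'b set \<Rightarrow> ('b \<Rightarrow> 'b \<Rightarrow> bool) \<Rightarrow> ('a \<Rightarrow> 'b) \<Rightarrow> bool" where
  "induced_embedding VH EH VG EG f \<longleftrightarrow> inj_on f VH \<and> f ` VH \<subseteq> VG
     \<and> (\<forall>x\<in>VH. \<forall>y\<in>VH. EH x y \<longleftrightarrow> EG (f x) (f y))"

definition rainbow_forces ::
  "'b set \<Rightarrow> ('b \<Rightarrow> 'b \<Rightarrow> bool) \<Rightarrow> 'a set \<Rightarrow> ('a \<Rightarrow> 'a \<Rightarrow> bool) \<Rightarrow> bool" where
  "rainbow_forces VG EG VH EH \<longleftrightarrow> (\<forall>c. proper_coloring VG EG c \<longrightarrow>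
     (\<exists>f. induced_embedding VH EH VG EG f \<and> inj_on c (f ` VH)))"

text \<open>rho(H): least m such that some graph on m vertices (w.l.o.g. on {0..<m})
  forces a rainbow induced copy of H.\<close>
definition rho :: "'a set \<Rightarrow> ('a \<Rightarrow> 'a \<Rightarrow> bool) \<Rightarrow> nat" where
  "rho VH EH = (LEAST m. \<exists>EG :: nat \<Rightarrow> nat \<Rightarrow> bool.
      simple_graph {..<m} EG \<and> rainbow_forces {..<m} EG VH EH)"

definition non_edges :: "'a set \<Rightarrow> ('a \<Rightarrow> 'a \<Rightarrow> bool) \<Rightarrow> 'a set set" where
  "non_edges V E = {{x, y} | x y. x \<in> V \<and> y \<in> V \<and> x \<noteq> y \<and> \<not> E x y}"

end

theory Submission
  imports Defs
begin

text \<open>Upper bound: order the vertices and replace each vertex u by a clique of 1 + k(u) copies,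
  where k(u) counts the non-neighbours of u preceding it, copies of adjacent vertices being fully
  joined; this graph has n + m' vertices. Given a proper colouring, pick copies greedily along the
  order: a copy of u is automatically coloured differently from the chosen copies of neighbours,
  and the k(u) earlier non-neighbours block at most k(u) of the 1 + k(u) distinct colours on the
  clique of u.

  Lower bound: take a forcing graph G on rho(H) vertices and a colouring of H with \<chi> colours,
  and grow a properly coloured vertex set D of G using the colours below i\<chi>. Colouring the rest
  of G injectively with fresh colours, the rainbow copy of H meets D in at most i\<chi> vertices, so
  it has at least n - i\<chi> vertices outside D; these join D with \<chi> new colours transported from
  H. After q = \<lceil>n/\<chi>\<rceil> rounds, rho(H) \<ge> |D| \<ge> \<Sum>j<q. n - j\<chi>, which is the stated bound.\<close>

lemma rainbow_forces_relabel:
  assumes h: "bij_betw h W VG" and forces: "rainbow_forces VG EG V E"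
  shows "rainbow_forces W (\<lambda>x y. x \<in> W \<and> y \<in> W \<and> EG (h x) (h y)) V E"
  unfolding rainbow_forces_def
proof (intro allI impI)
  fix c assume proper: "proper_coloring W (\<lambda>x y. x \<in> W \<and> y \<in> W \<and> EG (h x) (h y)) c"
  define h' where "h' = inv_into W h"
  have h': "bij_betw h' VG W" and hh': "\<And>x. x \<in> VG \<Longrightarrow> h (h' x) = x"
    using h by (simp_all add: h'_def bij_betw_inv_into bij_betw_inv_into_right)
  have h'W: "\<And>x. x \<in> VG \<Longrightarrow> h' x \<in> W"
    using h' bij_betwE by blast
  have "proper_coloring VG EG (c \<circ> h')"
    using proper h'W hh' unfolding proper_coloring_def by fastforce
  then obtain f where f: "induced_embedding V E VG EG f" "inj_on (c \<circ> h') (f ` V)"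
    using forces unfolding rainbow_forces_def by blast
  have "induced_embedding V E W (\<lambda>x y. x \<in> W \<and> y \<in> W \<and> EG (h x) (h y)) (h' \<circ> f)"
    using f(1) h'W hh' inj_on_subset[OF bij_betw_imp_inj_on[OF h']] unfolding induced_embedding_def
    by (auto simp: image_subset_iff intro: comp_inj_on)
  moreover have "inj_on c ((h' \<circ> f) ` V)"
    using f(2) by (metis image_comp inj_on_imageI)
  ultimately show "\<exists>f. induced_embedding V E W (\<lambda>x y. x \<in> W \<and> y \<in> W \<and> EG (h x) (h y)) f
      \<and> inj_on c (f ` V)" by blast
qed

lemma ex_forcing_graph_on_nat:
  assumes "simple_graph VG EG" and "rainbow_forces VG EG V E"
  shows "\<exists>EG' :: nat \<Rightarrow> nat \<Rightarrow> bool.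
    simple_graph {..<card VG} EG' \<and> rainbow_forces {..<card VG} EG' V E"
proof -
  obtain h where h: "bij_betw h {..<card VG} VG"
    using assms(1) ex_bij_betw_nat_finite[of VG] unfolding simple_graph_def atLeast0LessThan
    by blast
  have "simple_graph {..<card VG} (\<lambda>x y. x < card VG \<and> y < card VG \<and> EG (h x) (h y))"
    using assms(1) unfolding simple_graph_def by auto
  moreover have "rainbow_forces {..<card VG} (\<lambda>x y. x < card VG \<and> y < card VG \<and> EG (h x) (h y)) V E"
    using rainbow_forces_relabel[OF h assms(2)] by simp
  ultimately show ?thesis by blast
qed

lemma rho_le_card:
  assumes "simple_graph VG EG" and "rainbow_forces VG EG V E"
  shows "rho V E \<le> card VG"
  unfolding rho_def using ex_forcing_graph_on_nat[OF assms] by (rule Least_le)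

lemma rho_attained:
  assumes "simple_graph VG EG" and "rainbow_forces VG EG V E"
  shows "\<exists>EG' :: nat \<Rightarrow> nat \<Rightarrow> bool.
    simple_graph {..<rho V E} EG' \<and> rainbow_forces {..<rho V E} EG' V E"
  unfolding rho_def using ex_forcing_graph_on_nat[OF assms] by (rule LeastI)

lemma proper_coloring_inj_on:
  assumes "\<And>x. \<not> E x x" and "inj_on c A"
  shows "proper_coloring A E c"
  using assms unfolding proper_coloring_def inj_on_def by blast

lemma proper_coloring_shift:
  "proper_coloring A E c \<Longrightarrow> proper_coloring A E (\<lambda>x. a + c x)"
  unfolding proper_coloring_def by simp

lemma proper_coloring_image_embedding:
  assumes "induced_embedding V E VG EG f" and "proper_coloring V E c"
  shows "proper_coloring (f ` V) EG (c \<circ> inv_into V f)"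
  using assms unfolding proper_coloring_def induced_embedding_def by auto

lemma proper_coloring_if_Un:
  assumes "proper_coloring A E c" and "proper_coloring B E d"
    and "c ` A \<subseteq> {..<a}" and "\<And>x. x \<in> B \<Longrightarrow> a \<le> d x"
  shows "proper_coloring (A \<union> B) E (\<lambda>x. if x \<in> A then c x else d x)"
  unfolding proper_coloring_def
proof (intro ballI impI)
  fix x y assume "x \<in> A \<union> B" "y \<in> A \<union> B" "E x y"
  then show "(if x \<in> A then c x else d x) \<noteq> (if y \<in> A then c y else d y)"
    using assms unfolding proper_coloring_def by (cases "x \<in> A"; cases "y \<in> A") force+
qed

lemma chromatic_number_coloring:
  assumes "simple_graph V E"
  shows "\<exists>c. proper_coloring V E c \<and> c ` V \<subseteq> {..<chromatic_number V E}"
proof -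
  have "finite V" and irrefl: "\<And>x. \<not> E x x"
    using assms unfolding simple_graph_def by blast+
  then obtain c where c: "bij_betw c V {..<card V}"
    using ex_bij_betw_finite_nat[of V] unfolding atLeast0LessThan by blast
  have "proper_coloring V E c"
    using irrefl bij_betw_imp_inj_on[OF c] by (rule proper_coloring_inj_on)
  moreover have "c ` V \<subseteq> {..<card V}" using c bij_betw_imp_surj_on by blast
  ultimately have "\<exists>c. proper_coloring V E c \<and> c ` V \<subseteq> {..<card V}" by blast
  then show ?thesis unfolding chromatic_number_def by (rule LeastI)
qed

definition blowup :: "'a set \<Rightarrow> ('a \<Rightarrow> nat) \<Rightarrow> ('a \<times> nat) set" where
  "blowup V k = Sigma V (\<lambda>u. {..k u})"

definition blowup_edges ::
  "'a set \<Rightarrow> ('a \<Rightarrow> 'a \<Rightarrow> bool) \<Rightarrow> ('a \<Rightarrow> nat) \<Rightarrow> 'a \<times> nat \<Rightarrow> 'a \<times> nat \<Rightarrow> bool" where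
  "blowup_edges V E k p q \<longleftrightarrow> p \<in> blowup V k \<and> q \<in> blowup V k
     \<and> (fst p = fst q \<and> snd p \<noteq> snd q \<or> E (fst p) (fst q))"

lemma simple_graph_blowup:
  "simple_graph V E \<Longrightarrow> simple_graph (blowup V k) (blowup_edges V E k)"
  unfolding simple_graph_def blowup_edges_def blowup_def by auto

lemma card_blowup:
  assumes "finite V"
  shows "card (blowup V k) = card V + (\<Sum>u\<in>V. k u)"
  using assms unfolding blowup_def by (simp add: sum_Suc)

lemma blowup_free_copy:
  assumes proper: "proper_coloring (blowup V k) (blowup_edges V E k) c"
    and u: "u \<in> V" and S: "S \<subseteq> V" "finite S" and t: "\<forall>v\<in>S. t v \<le> k v"
    and few: "card {v\<in>S. \<not> E u v} \<le> k u"
  shows "\<exists>s\<le>k u. \<forall>v\<in>S. c (u, s) \<noteq> c (v, t v)"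
proof -
  define blocked where "blocked = (\<lambda>v. c (v, t v)) ` {v\<in>S. \<not> E u v}"
  have "card blocked \<le> card {v\<in>S. \<not> E u v}"
    unfolding blocked_def using S(2) by (simp add: card_image_le)
  then have card_blocked: "card blocked \<le> k u" using few by (rule le_trans)
  have card_copies: "card ((\<lambda>s. c (u, s)) ` {..k u}) = Suc (k u)"
  proof -
    have "inj_on (\<lambda>s. c (u, s)) {..k u}"
      using proper u unfolding inj_on_def proper_coloring_def blowup_edges_def blowup_def by fastforce
    then show ?thesis by (simp add: card_image)
  qed
  have "\<not> (\<lambda>s. c (u, s)) ` {..k u} \<subseteq> blocked"
  proof
    assume "(\<lambda>s. c (u, s)) ` {..k u} \<subseteq> blocked"
    moreover have "finite blocked" unfolding blocked_def using S(2) by simp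
    ultimately have "card ((\<lambda>s. c (u, s)) ` {..k u}) \<le> card blocked" by (rule card_mono[rotated])
    with card_blocked card_copies show False by linarith
  qed
  then obtain s where s: "s \<le> k u" "c (u, s) \<notin> blocked" by auto
  have "c (u, s) \<noteq> c (v, t v)" if v: "v \<in> S" for v
  proof (cases "E u v")
    case True
    then have "blowup_edges V E k (u, s) (v, t v)"
      using u s S(1) t v unfolding blowup_edges_def blowup_def by auto
    then show ?thesis using proper unfolding proper_coloring_def blowup_edges_def by blast
  next
    case False
    then show ?thesis using s(2) v unfolding blocked_def by auto
  qed
  with s(1) show ?thesis by blast
qed

lemma blowup_greedy_transversal:
  fixes g :: "'a \<Rightarrow> nat"
  assumes proper: "proper_coloring (blowup V k) (blowup_edges V E k) c"
    and "finite V" and g: "inj_on g V"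
    and k: "\<forall>u\<in>V. card {v\<in>V. g v < g u \<and> \<not> E u v} \<le> k u"
  shows "\<exists>t. (\<forall>u\<in>V. t u \<le> k u) \<and> inj_on (\<lambda>u. c (u, t u)) {u\<in>V. g u < N}"
proof (induction N)
  case 0
  show ?case by (intro exI[of _ "\<lambda>_. 0"]) simp
next
  case (Suc N)
  then obtain t where t: "\<forall>u\<in>V. t u \<le> k u"
    and inj: "inj_on (\<lambda>u. c (u, t u)) {u\<in>V. g u < N}"
    by blast
  show ?case
  proof (cases "\<exists>u\<in>V. g u = N")
    case False
    then have "{u\<in>V. g u < Suc N} = {u\<in>V. g u < N}" by (auto simp: less_Suc_eq)
    with t inj show ?thesis by auto
  next
    case True
    then obtain u where u: "u \<in> V" "g u = N" by blast
    define S where "S = {v\<in>V. g v < N}"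
    have "{v\<in>S. \<not> E u v} = {v\<in>V. g v < g u \<and> \<not> E u v}" using u unfolding S_def by auto
    then have few: "card {v\<in>S. \<not> E u v} \<le> k u" using k u(1) by simp
    have S: "S \<subseteq> V" "finite S" using \<open>finite V\<close> unfolding S_def by auto
    with t have "\<forall>v\<in>S. t v \<le> k v" by blast
    then obtain s where s: "s \<le> k u" "\<forall>v\<in>S. c (u, s) \<noteq> c (v, t v)"
      using blowup_free_copy[OF proper u(1) S _ few] by blast
    have next_layer: "{v\<in>V. g v < Suc N} = insert u S"
      using u g unfolding S_def by (auto simp: less_Suc_eq inj_on_eq_iff)
    have "u \<notin> S" using u unfolding S_def by simp
    then have "inj_on (\<lambda>v. c (v, (t(u := s)) v)) S \<longleftrightarrow> inj_on (\<lambda>v. c (v, t v)) S"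
      and "(\<lambda>v. c (v, (t(u := s)) v)) ` S = (\<lambda>v. c (v, t v)) ` S"
      by (auto intro!: inj_on_cong image_cong)
    with inj s(2) have "inj_on (\<lambda>v. c (v, (t(u := s)) v)) (insert u S)"
      unfolding S_def by auto
    then show ?thesis
      unfolding next_layer using t s(1) by (intro exI[of _ "t(u := s)"]) auto
  qed
qed

lemma blowup_rainbow_forces:
  fixes g :: "'a \<Rightarrow> nat"
  assumes G: "simple_graph V E" and g: "inj_on g V"
    and k: "\<forall>u\<in>V. card {v\<in>V. g v < g u \<and> \<not> E u v} \<le> k u"
  shows "rainbow_forces (blowup V k) (blowup_edges V E k) V E"
  unfolding rainbow_forces_def
proof (intro allI impI)
  fix c assume proper: "proper_coloring (blowup V k) (blowup_edges V E k) c"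
  have "finite V" and irrefl: "\<And>x. \<not> E x x"
    using G unfolding simple_graph_def by blast+
  obtain N where "\<forall>n\<in>g ` V. n < N"
    using \<open>finite V\<close> finite_nat_set_iff_bounded by blast
  then have "{u\<in>V. g u < N} = V" by auto
  with blowup_greedy_transversal[OF proper \<open>finite V\<close> g k, of N]
  obtain t where t: "\<forall>u\<in>V. t u \<le> k u" and inj: "inj_on (\<lambda>u. c (u, t u)) V"
    by auto
  have "induced_embedding V E (blowup V k) (blowup_edges V E k) (\<lambda>u. (u, t u))"
    using t irrefl unfolding induced_embedding_def blowup_edges_def blowup_def
    by (auto simp: inj_on_def)
  moreover have "inj_on c ((\<lambda>u. (u, t u)) ` V)"
    using inj by (intro inj_on_imageI) (simp add: comp_def)
  ultimately show "\<exists>f. induced_embedding V E (blowup V k) (blowup_edges V E k) f \<and> inj_on c (f ` V)"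
    by blast
qed

lemma sum_earlier_non_neighbours_le:
  fixes g :: "'a \<Rightarrow> 'b :: linorder"
  assumes "finite V"
  shows "(\<Sum>u\<in>V. card {v\<in>V. g v < g u \<and> \<not> E u v}) \<le> card (non_edges V E)"
proof -
  let ?P = "Sigma V (\<lambda>u. {v\<in>V. g v < g u \<and> \<not> E u v})"
  have "(\<Sum>u\<in>V. card {v\<in>V. g v < g u \<and> \<not> E u v}) = card ?P"
    using assms by (simp add: card_SigmaI)
  also have "\<dots> \<le> card (non_edges V E)"
  proof (rule card_inj_on_le)
    show "inj_on (\<lambda>(u, v). {u, v}) ?P"
      by (auto simp: inj_on_def doubleton_eq_iff)
    show "(\<lambda>(u, v). {u, v}) ` ?P \<subseteq> non_edges V E"
      unfolding non_edges_def by force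
    show "finite (non_edges V E)"
      by (rule finite_subset[of _ "Pow V"]) (auto simp: non_edges_def assms)
  qed
  finally show ?thesis .
qed

lemma ex_small_rainbow_forcing_graph:
  fixes V :: "'a set"
  assumes "simple_graph V E"
  shows "\<exists>VG :: ('a \<times> nat) set. \<exists>EG. simple_graph VG EG \<and> rainbow_forces VG EG V E
           \<and> card VG \<le> card V + card (non_edges V E)"
proof -
  have "finite V" using assms unfolding simple_graph_def by blast
  then obtain g :: "'a \<Rightarrow> nat" where g: "inj_on g V"
    using ex_bij_betw_finite_nat bij_betw_imp_inj_on by blast
  define k where "k u = card {v\<in>V. g v < g u \<and> \<not> E u v}" for u
  have "rainbow_forces (blowup V k) (blowup_edges V E k) V E"
    using assms g by (rule blowup_rainbow_forces) (simp add: k_def)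
  moreover have "card (blowup V k) \<le> card V + card (non_edges V E)"
    using card_blowup[OF \<open>finite V\<close>] sum_earlier_non_neighbours_le[OF \<open>finite V\<close>, of g E]
    unfolding k_def by simp
  ultimately show ?thesis
    using simple_graph_blowup[OF assms] by blast
qed

lemma rainbow_copy_mostly_outside:
  fixes EG :: "nat \<Rightarrow> nat \<Rightarrow> bool"
  assumes G: "simple_graph VG EG" and forces: "rainbow_forces VG EG V E"
    and D: "D \<subseteq> VG" "proper_coloring D EG d" "d ` D \<subseteq> {..<a}"
  shows "\<exists>f. induced_embedding V E VG EG f \<and> card V - a \<le> card (f ` V - D)"
proof -
  have irrefl: "\<And>x. \<not> EG x x" and "finite VG"
    using G unfolding simple_graph_def by blast+
  define c where "c = (\<lambda>x. if x \<in> D then d x else a + x)"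
  have "proper_coloring (VG - D) EG (\<lambda>x. a + x)"
    using proper_coloring_shift[OF proper_coloring_inj_on[OF irrefl inj_on_id2]] .
  then have "proper_coloring (D \<union> (VG - D)) EG c"
    unfolding c_def by (rule proper_coloring_if_Un[OF D(2) _ D(3)]) simp
  then have "proper_coloring VG EG c"
    using D(1) by (simp add: Un_absorb1)
  then obtain f where f: "induced_embedding V E VG EG f" "inj_on c (f ` V)"
    using forces unfolding rainbow_forces_def by blast
  have fV: "f ` V \<subseteq> VG" and card_fV: "card (f ` V) = card V"
    using f(1) unfolding induced_embedding_def by (auto simp: card_image)
  have "card (f ` V \<inter> D) \<le> card {..<a}"
  proof (rule card_inj_on_le)
    show "inj_on c (f ` V \<inter> D)" using f(2) by (rule inj_on_subset) blast
    show "c ` (f ` V \<inter> D) \<subseteq> {..<a}" using D(3) unfolding c_def by auto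
  qed simp
  then have "card V - a \<le> card (f ` V - D)"
    using card_fV \<open>finite VG\<close> fV
    by (simp add: card_Diff_subset_Int finite_subset)
  with f(1) show ?thesis by blast
qed

lemma rainbow_forces_extend_coloring:
  fixes EG :: "nat \<Rightarrow> nat \<Rightarrow> bool"
  assumes G: "simple_graph VG EG" and forces: "rainbow_forces VG EG V E"
    and cH: "proper_coloring V E cH" "cH ` V \<subseteq> {..<k}"
    and D: "D \<subseteq> VG" "proper_coloring D EG d" "d ` D \<subseteq> {..<a}"
  shows "\<exists>D' d'. D' \<subseteq> VG \<and> proper_coloring D' EG d' \<and> d' ` D' \<subseteq> {..<a + k}
           \<and> card D + (card V - a) \<le> card D'"
proof -
  obtain f where f: "induced_embedding V E VG EG f" and new: "card V - a \<le> card (f ` V - D)"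
    using rainbow_copy_mostly_outside[OF G forces D] by blast
  have "finite VG" using G unfolding simple_graph_def by blast
  with D(1) have "finite D" by (rule finite_subset)
  have fV: "f ` V \<subseteq> VG" using f unfolding induced_embedding_def by blast
  define d' where "d' = (\<lambda>x. if x \<in> D then d x else a + (cH \<circ> inv_into V f) x)"
  have "proper_coloring (D \<union> f ` V) EG d'"
    unfolding d'_def
    using D(2) proper_coloring_shift[OF proper_coloring_image_embedding[OF f cH(1)]] D(3)
    by (rule proper_coloring_if_Un) auto
  moreover have "d' ` (D \<union> f ` V) \<subseteq> {..<a + k}"
  proof (rule image_subsetI)
    fix x assume "x \<in> D \<union> f ` V"
    then have "x \<in> D \<or> inv_into V f x \<in> V" by (auto intro: inv_into_into)
    then show "d' x \<in> {..<a + k}"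
      using D(3) cH(2) unfolding d'_def by fastforce
  qed
  moreover have "card (D \<union> f ` V) = card D + card (f ` V - D)"
  proof -
    have "card (D \<union> (f ` V - D)) = card D + card (f ` V - D)"
      using \<open>finite D\<close> finite_subset[OF fV \<open>finite VG\<close>] by (intro card_Un_disjoint) auto
    then show ?thesis by simp
  qed
  ultimately show ?thesis
    using D(1) fV new by (intro exI[of _ "D \<union> f ` V"] exI[of _ d']) auto
qed

lemma rainbow_forces_layers:
  fixes EG :: "nat \<Rightarrow> nat \<Rightarrow> bool"
  assumes G: "simple_graph VG EG" and forces: "rainbow_forces VG EG V E"
    and cH: "proper_coloring V E cH" "cH ` V \<subseteq> {..<k}"
  shows "\<exists>D d. D \<subseteq> VG \<and> proper_coloring D EG d \<and> d ` D \<subseteq> {..<i * k}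
           \<and> (\<Sum>j<i. card V - j * k) \<le> card D"
proof (induction i)
  case 0
  show ?case by (auto simp: proper_coloring_def)
next
  case (Suc i)
  then obtain D d where D: "D \<subseteq> VG" "proper_coloring D EG d" "d ` D \<subseteq> {..<i * k}"
    and layers: "(\<Sum>j<i. card V - j * k) \<le> card D"
    by blast
  obtain D' d' where D': "D' \<subseteq> VG" "proper_coloring D' EG d'" "d' ` D' \<subseteq> {..<i * k + k}"
    and grow: "card D + (card V - i * k) \<le> card D'"
    using rainbow_forces_extend_coloring[OF G forces cH D] by blast
  have "d' ` D' \<subseteq> {..<Suc i * k}" using D'(3) by (simp add: add.commute)
  moreover have "(\<Sum>j<Suc i. card V - j * k) \<le> card D'" using layers grow by simp
  ultimately show ?case using D'(1,2) by blast
qed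

lemma layer_sum_le_card:
  fixes EG :: "nat \<Rightarrow> nat \<Rightarrow> bool"
  assumes G: "simple_graph VG EG" and forces: "rainbow_forces VG EG V E"
    and cH: "proper_coloring V E cH" "cH ` V \<subseteq> {..<k}"
  shows "(\<Sum>j<i. card V - j * k) \<le> card VG"
proof -
  obtain D d where D: "D \<subseteq> VG" and "proper_coloring D EG d" "d ` D \<subseteq> {..<i * k}"
    and layers: "(\<Sum>j<i. card V - j * k) \<le> card D"
    using rainbow_forces_layers[OF assms, of i] by blast
  have "finite VG" using G unfolding simple_graph_def by blast
  with D have "card D \<le> card VG" by (rule card_mono[rotated])
  with layers show ?thesis by (rule le_trans)
qed

lemma sum_arithmetic_progression:
  "(\<Sum>j<q. (a::real) - real j * b) = real q * (a - b / 2 * (real q - 1))"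
proof (induction q)
  case (Suc q)
  then show ?case by (simp add: field_simps)
qed simp

lemma ceiling_layer_sum:
  fixes n k :: nat
  assumes "k > 0"
  shows "real_of_int \<lceil>real n / real k\<rceil> * (real n - real k / 2 * real_of_int \<lceil>real n / real k - 1\<rceil>)
           = real (\<Sum>j<nat \<lceil>real n / real k\<rceil>. n - j * k)"
proof -
  define q where "q = nat \<lceil>real n / real k\<rceil>"
  have "0 \<le> real n / real k" by simp
  then have "0 \<le> \<lceil>real n / real k\<rceil>" by linarith
  then have q: "real_of_int \<lceil>real n / real k\<rceil> = real q" unfolding q_def by simp
  have "j * k \<le> n" if "j < q" for j
  proof -
    have "real q - 1 < real n / real k"
      using ceiling_correct[of "real n / real k"] q by simp
    moreover have "real j \<le> real q - 1" using that by linarith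
    ultimately have "real j < real n / real k" by linarith
    then have "real j * real k < real n" using assms by (simp add: pos_less_divide_eq)
    then show ?thesis by (metis of_nat_less_iff of_nat_mult less_imp_le)
  qed
  then have "real (\<Sum>j<q. n - j * k) = (\<Sum>j<q. real n - real j * real k)"
    by simp
  also have "\<dots> = real q * (real n - real k / 2 * (real q - 1))"
    by (rule sum_arithmetic_progression)
  finally have sum: "real (\<Sum>j<q. n - j * k) = real q * (real n - real k / 2 * (real q - 1))" .
  have "real_of_int \<lceil>real n / real k - 1\<rceil> = real q - 1" using q by simp
  then show ?thesis unfolding q_def[symmetric] q using sum by simp
qed

theorem theorem1p1:
  fixes V :: "'a set" and E :: "'a \<Rightarrow> 'a \<Rightarrow> bool"
  assumes "simple_graph V E" and "V \<noteq> {}"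
  defines "n \<equiv> card V" and "\<chi> \<equiv> chromatic_number V E" and "m' \<equiv> card (non_edges V E)"
  shows "real_of_int \<lceil>real n / real \<chi>\<rceil> *
           (real n - real \<chi> / 2 * real_of_int \<lceil>real n / real \<chi> - 1\<rceil>) \<le> real (rho V E)
         \<and> rho V E \<le> n + m'"
proof
  obtain VG :: "('a \<times> nat) set" and EG where G: "simple_graph VG EG" "rainbow_forces VG EG V E"
    and small: "card VG \<le> n + m'"
    using ex_small_rainbow_forcing_graph[OF assms(1)] unfolding n_def m'_def by blast
  show "rho V E \<le> n + m'"
    using rho_le_card[OF G] small by (rule le_trans)
  obtain EG\<rho> :: "nat \<Rightarrow> nat \<Rightarrow> bool" where G\<rho>: "simple_graph {..<rho V E} EG\<rho>"
    "rainbow_forces {..<rho V E} EG\<rho> V E"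
    using rho_attained[OF G] by blast
  obtain cH where cH: "proper_coloring V E cH" "cH ` V \<subseteq> {..<\<chi>}"
    using chromatic_number_coloring[OF assms(1)] unfolding \<chi>_def by blast
  with assms(2) have "\<chi> > 0" by (auto intro: Nat.gr0I)
  have "(\<Sum>j<nat \<lceil>real n / real \<chi>\<rceil>. n - j * \<chi>) \<le> rho V E"
    using layer_sum_le_card[OF G\<rho> cH] unfolding n_def by simp
  then show "real_of_int \<lceil>real n / real \<chi>\<rceil> *
      (real n - real \<chi> / 2 * real_of_int \<lceil>real n / real \<chi> - 1\<rceil>) \<le> real (rho V E)"
    unfolding ceiling_layer_sum[OF \<open>\<chi> > 0\<close>] by linarith
qed

end
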